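(* Let $X\subset Y$ be spaces, $\alpha<\omega_1$, and let $\mathcal C$ be a Suslin scheme on $X$ satisfying $\mathcal A(\overline{\mathcal C}^Y)=X$. Then: (i) if $\alpha$ is even, $\mathbf R_\alpha(\mathcal C,Y)\setminus X=\{y\in Y\setminus X: D_{\mathrm{iie}}^{\alpha'}(S_{\mathcal C}(y))\ne\emptyset\}$; (ii) if $\alpha$ is odd, $\mathbf R_\alpha(\mathcal C,Y)\setminus X=\{y\in Y\setminus X: D_{\mathrm{iie}}^{\alpha'}(S_{\mathcal C}(y))\supsetneq\{\emptyset\}\}$; (iii) if $\alpha$ is odd, then for every $i\in\omega$, $\mathbf R_{T^c_{\alpha,i}}(\mathcal C,Y)\setminus X=\{y\in Y\setminus X: D_{\mathrm{iie}}^{\alpha'}(S_{\mathcal C}(y))\cap\omega^i\ne\emptyset\}$.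
   Context: Sequences/trees: $\omega^{<\omega}$ finite sequences, $\omega^i$ those of length $i$, $\sqsubseteq$ extension, a tree is a subset of $\omega^{<\omega}$ closed under initial segments; for $S\subset\omega^{<\omega}$, $\mathrm{cl}_{\mathrm{Tr}}(S)$ is the set of initial segments of elements of $S$; $i^\frown S=\{(i)^\frown s:s\in S\}$. Suslin scheme in $Y$: family $\mathcal C=(C(s))_{s\in\omega^{<\omega}}$ of subsets of $Y$ with $C(t)\subset C(s)$ for $t\sqsupseteq s$; $\mathcal A(\mathcal C)=\bigcup_{\sigma\in\omega^\omega}\bigcap_n C(\sigma|n)$; a Suslin scheme on $X$ is a Suslin scheme in $X$ with $\mathcal A(\mathcal C)\supset X$ (hence $=X$). $\overline{\mathcal C}^Y=(\overline{C(s)\cap Y}^Y)_s$. Admissible maps $\varphi:T\to\omega^{<\omega}$: monotone w.r.t. $\sqsubseteq$ and $|\varphi(t)|=t(0)+\dots+t(k)$. $\mathbf R_T(\mathcal D)=\{x\in D(\emptyset):\exists$ admissible $\varphi:T\to\omega^{<\omega}$, $x\in D(\varphi(t))\ \forall t\in T\}$; $\mathbf R_T(\mathcal C,Y)=\mathbf R_T(\overline{\mathcal C}^Y)$. Trees $T_\beta$: fix bijections $\pi_\beta:\omega\to\beta$ for countable limit $\beta$; $T_0=\{\emptyset\}$, $T_\beta=\{\emptyset\}\cup\bigcup_n n^\frown T_{\beta-1}$ (successor), $T_\beta=\{\emptyset\}\cup\bigcup_n n^\frown T_{\pi_\beta(n)}$ (limit), $T_{\omega_1}=\omega^{<\omega}$.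 Writing $\alpha=\lambda+2n+i$ ($\lambda$ limit or $0$, $n\in\omega$, $i\in\{0,1\}$), $\alpha'=\lambda+n$. Canonical trees: $T^c_\alpha=T_{\alpha'}$ for even $\alpha$; for odd $\alpha$ and $i\in\omega$, $T^c_{\alpha,i}=\{\emptyset\}\cup i^\frown T_{\alpha'}$ and $T^c_\alpha=T^c_{\alpha,1}$. $\mathbf R_\alpha(\mathcal C,Y)=\mathbf R_{T^c_\alpha}(\mathcal C,Y)$. Derivative: for a tree $T$, $D_{\mathrm{iie}}(T)=\{t\in T: T$ contains infinitely many pairwise incomparable extensions of $t$ of pairwise different lengths$\}$; for $S\subset\omega^{<\omega}$, $D^0_{\mathrm{iie}}(S)=\mathrm{cl}_{\mathrm{Tr}}(S)$, $D^{\beta+1}_{\mathrm{iie}}(S)=D_{\mathrm{iie}}(D^\beta_{\mathrm{iie}}(S))$, $D^\lambda_{\mathrm{iie}}(S)=\bigcap_{\beta<\lambda}D^\beta_{\mathrm{iie}}(S)$ for limit $\lambda$. For $y\in Y$, $S_{\mathcal C}(y)=\{s\in\omega^{<\omega}: y\in\overline{C(s)}^Y\}$. *)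

theory Defs
  imports "HOL-Analysis.Analysis" "HOL-Library.Sublist"
begin

(* Finite sequences omega^{<omega} are nat lists; s \<sqsubseteq> t is prefix s t. *)

definition suslin_scheme :: "(nat list \<Rightarrow> 'a set) \<Rightarrow> bool" where
  "suslin_scheme C \<longleftrightarrow> (\<forall>s t. prefix s t \<longrightarrow> C t \<subseteq> C s)"

definition suslin_op :: "(nat list \<Rightarrow> 'a set) \<Rightarrow> 'a set" where
  "suslin_op C = (\<Union>\<sigma>::nat \<Rightarrow> nat. \<Inter>n. C (map \<sigma> [0..<n]))"

text \<open>Closure of the scheme in the ambient space Y (= UNIV of the type).\<close>
definition closure_scheme :: "(nat list \<Rightarrow> 'a::topological_space set) \<Rightarrow> nat list \<Rightarrow> 'a set" where
  "closure_scheme C s = closure (C s)"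

definition admissible :: "nat list set \<Rightarrow> (nat list \<Rightarrow> nat list) \<Rightarrow> bool" where
  "admissible T \<phi> \<longleftrightarrow>
     (\<forall>s\<in>T. \<forall>t\<in>T. prefix s t \<longrightarrow> prefix (\<phi> s) (\<phi> t)) \<and>
     (\<forall>t\<in>T. length (\<phi> t) = sum_list t)"

definition R_tree :: "nat list set \<Rightarrow> (nat list \<Rightarrow> 'a set) \<Rightarrow> 'a set" where
  "R_tree T D = {x \<in> D []. \<exists>\<phi>. admissible T \<phi> \<and> (\<forall>t\<in>T. x \<in> D (\<phi> t))}"

definition R_tree_sp :: "nat list set \<Rightarrow> (nat list \<Rightarrow> 'a::topological_space set) \<Rightarrow> 'a set" where
  "R_tree_sp T C = R_tree T (closure_scheme C)"

definition S_C :: "(nat list \<Rightarrow> 'a::topological_space set) \<Rightarrow> 'a \<Rightarrow> nat list set" where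
  "S_C C y = {s. y \<in> closure (C s)}"

(* Ordinals: elements of an arbitrary well-ordered type *)

definition ord_zero :: "'o::wellorder \<Rightarrow> bool" where
  "ord_zero \<beta> \<longleftrightarrow> (\<forall>\<gamma>. \<not> \<gamma> < \<beta>)"

definition ord_succ :: "'o::wellorder \<Rightarrow> bool" where
  "ord_succ \<beta> \<longleftrightarrow> (\<exists>\<gamma><\<beta>. \<forall>\<delta><\<beta>. \<delta> \<le> \<gamma>)"

definition ord_limit :: "'o::wellorder \<Rightarrow> bool" where
  "ord_limit \<beta> \<longleftrightarrow> \<not> ord_zero \<beta> \<and> \<not> ord_succ \<beta>"

definition ord_pred :: "'o::wellorder \<Rightarrow> 'o" where
  "ord_pred \<beta> = (GREATEST \<gamma>. \<gamma> < \<beta>)"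

definition ord_next :: "'o::wellorder \<Rightarrow> 'o" where
  "ord_next \<gamma> = (LEAST \<delta>. \<gamma> < \<delta>)"

text \<open>alpha = lambda + k with lambda limit or zero, k finite.\<close>
definition ord_lam :: "'o::wellorder \<Rightarrow> 'o" where
  "ord_lam \<alpha> = (GREATEST \<gamma>. \<gamma> \<le> \<alpha> \<and> \<not> ord_succ \<gamma>)"

definition ord_fin :: "'o::wellorder \<Rightarrow> nat" where
  "ord_fin \<alpha> = (LEAST k. (ord_next ^^ k) (ord_lam \<alpha>) = \<alpha>)"

definition ord_even :: "'o::wellorder \<Rightarrow> bool" where
  "ord_even \<alpha> \<longleftrightarrow> even (ord_fin \<alpha>)"

text \<open>alpha' = lambda + n where alpha = lambda + 2n + i.\<close>
definition ord_prime :: "'o::wellorder \<Rightarrow> 'o" where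
  "ord_prime \<alpha> = (ord_next ^^ (ord_fin \<alpha> div 2)) (ord_lam \<alpha>)"

(* Trees T_beta, with pi beta : nat -> beta the fixed bijections for limit beta *)
definition T_tree :: "('o::wellorder \<Rightarrow> nat \<Rightarrow> 'o) \<Rightarrow> 'o \<Rightarrow> nat list set" where
  "T_tree \<pi> = wfrec {(x, y). x < y} (\<lambda>f \<beta>.
     if ord_zero \<beta> then {[]}
     else if ord_succ \<beta> then insert [] (\<Union>n. (\<lambda>t. n # t) ` f (ord_pred \<beta>))
     else insert [] (\<Union>n. (\<lambda>t. n # t) ` f (\<pi> \<beta> n)))"

definition Tc_odd :: "('o::wellorder \<Rightarrow> nat \<Rightarrow> 'o) \<Rightarrow> 'o \<Rightarrow> nat \<Rightarrow> nat list set" where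
  "Tc_odd \<pi> \<alpha> i = insert [] ((\<lambda>t. i # t) ` T_tree \<pi> (ord_prime \<alpha>))"

definition Tc :: "('o::wellorder \<Rightarrow> nat \<Rightarrow> 'o) \<Rightarrow> 'o \<Rightarrow> nat list set" where
  "Tc \<pi> \<alpha> = (if ord_even \<alpha> then T_tree \<pi> (ord_prime \<alpha>) else Tc_odd \<pi> \<alpha> 1)"

definition R_alpha :: "('o::wellorder \<Rightarrow> nat \<Rightarrow> 'o) \<Rightarrow> 'o \<Rightarrow> (nat list \<Rightarrow> 'a::topological_space set) \<Rightarrow> 'a set" where
  "R_alpha \<pi> \<alpha> C = R_tree_sp (Tc \<pi> \<alpha>) C"

definition cl_tr :: "nat list set \<Rightarrow> nat list set" where
  "cl_tr S = {s. \<exists>t\<in>S. prefix s t}"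

definition D_iie :: "nat list set \<Rightarrow> nat list set" where
  "D_iie T = {t \<in> T. \<exists>E \<subseteq> T. infinite E \<and> (\<forall>u\<in>E. prefix t u) \<and>
      (\<forall>u\<in>E. \<forall>v\<in>E. u \<noteq> v \<longrightarrow> \<not> prefix u v \<and> \<not> prefix v u \<and> length u \<noteq> length v)}"

definition D_iter :: "nat list set \<Rightarrow> 'o::wellorder \<Rightarrow> nat list set" where
  "D_iter S = wfrec {(x, y). x < y} (\<lambda>f \<beta>.
     if ord_zero \<beta> then cl_tr S
     else if ord_succ \<beta> then D_iie (f (ord_pred \<beta>))
     else (\<Inter>\<gamma>\<in>{\<gamma>. \<gamma> < \<beta>}. f \<gamma>))"

end

theory Submission
  imports Defs
begin

text \<open>
  For \<open>y \<notin> X\<close> the tree \<open>S\<^sub>C(y)\<close> is prefix-closed and has no infinite branch, since an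
  infinite branch \<open>\<sigma>\<close> would put \<open>y\<close> into \<open>\<A>(cl C) = X\<close>. For such a tree \<open>S\<close> one shows by
  induction on \<open>\<beta>\<close> that \<open>T\<^sub>\<beta>\<close> embeds admissibly into \<open>S\<close> above a node \<open>u\<close> iff
  \<open>u \<in> D\<^sup>\<beta>\<^sub>i\<^sub>i\<^sub>e(S)\<close>. The tree \<open>T\<^sub>\<beta>\<^sub>+\<^sub>1\<close> hangs a copy of \<open>T\<^sub>\<beta>\<close> below every child of
  the root, so it embeds above \<open>u\<close> iff \<open>T\<^sub>\<beta>\<close> embeds above extensions of \<open>u\<close> of every length;
  in a tree without infinite branches this is membership in \<open>D\<^sub>i\<^sub>i\<^sub>e\<close>, by a K\<ouml>nig-type
  argument. At a limit \<open>\<beta>\<close> the subtrees \<open>T\<^bsub>\<pi>\<^sub>\<beta>(n)\<^esub>\<close> run through all \<open>\<gamma> < \<beta>\<close>, and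
  \<open>D\<^sup>\<gamma>\<^sup>+\<^sup>1 \<subseteq> D\<^sup>\<gamma>\<close> gives the same extension condition for \<open>D\<^sup>\<beta>\<close>. Read at the root of
  \<open>T\<^sub>\<alpha>\<^sub>'\<close>, this gives (i); for \<open>{\<emptyset>} \<union> i\<^sup>\<frown>T\<^sub>\<alpha>\<^sub>'\<close> it asks for a node of length \<open>i\<close>
  in \<open>D\<^sup>\<alpha>\<^sup>'\<^sub>i\<^sub>i\<^sub>e(S)\<close>, giving (ii) and (iii).
\<close>

section \<open>Successors, predecessors and the decomposition \<open>\<alpha> = \<lambda> + k\<close>\<close>

lemma ord_pred_eq:
  fixes \<beta> \<gamma> :: "'o::wellorder"
  assumes "\<gamma> < \<beta>" and "\<forall>\<delta><\<beta>. \<delta> \<le> \<gamma>"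
  shows "ord_pred \<beta> = \<gamma>"
  unfolding ord_pred_def by (rule Greatest_equality) (use assms in auto)

lemma ord_pred_less: "ord_succ \<beta> \<Longrightarrow> ord_pred \<beta> < \<beta>"
  unfolding ord_succ_def using ord_pred_eq by metis

lemma le_ord_pred: "ord_succ \<beta> \<Longrightarrow> \<delta> < \<beta> \<Longrightarrow> \<delta> \<le> ord_pred \<beta>"
  unfolding ord_succ_def using ord_pred_eq by metis

lemma ord_next_greater: "\<gamma> < \<delta> \<Longrightarrow> \<gamma> < ord_next \<gamma>"
  unfolding ord_next_def by (rule LeastI)

lemma ord_next_le: "\<gamma> < \<delta> \<Longrightarrow> ord_next \<gamma> \<le> \<delta>"
  unfolding ord_next_def by (rule Least_le)

lemma less_ord_nextD: "\<epsilon> < ord_next \<gamma> \<Longrightarrow> \<epsilon> \<le> \<gamma>"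
  using ord_next_le[of \<gamma> \<epsilon>] by (meson leD le_less_linear)

lemma ord_succ_ord_next: "\<gamma> < \<delta> \<Longrightarrow> ord_succ (ord_next \<gamma>)"
  unfolding ord_succ_def using ord_next_greater less_ord_nextD by blast

lemma ord_pred_ord_next: "\<gamma> < \<delta> \<Longrightarrow> ord_pred (ord_next \<gamma>) = \<gamma>"
  by (rule ord_pred_eq) (use ord_next_greater less_ord_nextD in blast)+

lemma ord_next_ord_pred: "ord_succ \<beta> \<Longrightarrow> ord_next (ord_pred \<beta>) = \<beta>"
  unfolding ord_next_def
  by (rule Least_equality) (use ord_pred_less le_ord_pred in \<open>auto simp: not_less[symmetric]\<close>)

lemma ord_succ_not_zero: "ord_succ \<beta> \<Longrightarrow> \<not> ord_zero \<beta>"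
  unfolding ord_succ_def ord_zero_def by blast

lemma ord_lam_not_succ: "\<not> ord_succ \<alpha> \<Longrightarrow> ord_lam \<alpha> = \<alpha>"
  unfolding ord_lam_def by (rule Greatest_equality) auto

lemma ord_lam_succ:
  assumes "ord_succ \<alpha>"
  shows "ord_lam \<alpha> = ord_lam (ord_pred \<alpha>)"
proof -
  have "\<gamma> \<le> \<alpha> \<and> \<not> ord_succ \<gamma> \<longleftrightarrow> \<gamma> \<le> ord_pred \<alpha> \<and> \<not> ord_succ \<gamma>" for \<gamma>
  proof -
    have "\<gamma> \<le> \<alpha> \<and> \<gamma> \<noteq> \<alpha> \<longleftrightarrow> \<gamma> \<le> ord_pred \<alpha>"
      using ord_pred_less[OF assms] le_ord_pred[OF assms] by force
    then show ?thesis using assms by blast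
  qed
  then show ?thesis
    unfolding ord_lam_def by simp
qed

lemma ord_lam_decomp:
  fixes \<alpha> :: "'o::wellorder"
  shows "ord_lam \<alpha> \<le> \<alpha> \<and> (\<exists>k. (ord_next ^^ k) (ord_lam \<alpha>) = \<alpha>)"
proof (induction \<alpha> rule: less_induct)
  case (less \<alpha>)
  show ?case
  proof (cases "ord_succ \<alpha>")
    case True
    then obtain k where le: "ord_lam (ord_pred \<alpha>) \<le> ord_pred \<alpha>"
      and k: "(ord_next ^^ k) (ord_lam (ord_pred \<alpha>)) = ord_pred \<alpha>"
      using less ord_pred_less by blast
    have "ord_lam \<alpha> \<le> \<alpha>"
      using le ord_pred_less[OF True] unfolding ord_lam_succ[OF True] by simp
    moreover have "(ord_next ^^ Suc k) (ord_lam \<alpha>) = \<alpha>"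
      using k ord_next_ord_pred[OF True] unfolding ord_lam_succ[OF True] by simp
    ultimately show ?thesis by blast
  next
    case False
    show ?thesis
      by (intro conjI exI[of _ 0]) (simp_all add: ord_lam_not_succ[OF False])
  qed
qed

lemma ord_prime_le: "ord_prime \<alpha> \<le> \<alpha>"
proof -
  let ?x = "\<lambda>k. (ord_next ^^ k) (ord_lam \<alpha>)"
  have fin: "?x (ord_fin \<alpha>) = \<alpha>"
    unfolding ord_fin_def using conjunct2[OF ord_lam_decomp] by (rule LeastI_ex)
  have "?x k \<le> \<alpha>" if "k \<le> ord_fin \<alpha>" for k
    using that
  proof (induction k)
    case 0
    then show ?case using conjunct1[OF ord_lam_decomp] by simp
  next
    case (Suc k)
    have "?x k \<noteq> \<alpha>"
      using Suc.prems not_less_Least unfolding ord_fin_def by (metis Suc_le_lessD)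
    then have "?x k < \<alpha>" using Suc by simp
    then show ?case using ord_next_le by simp
  qed
  then show ?thesis unfolding ord_prime_def by simp
qed

lemma D_iter_unfold:
  "D_iter S \<beta> = (if ord_zero \<beta> then cl_tr S
     else if ord_succ \<beta> then D_iie (D_iter S (ord_pred \<beta>))
     else (\<Inter>\<gamma>\<in>{\<gamma>. \<gamma> < \<beta>}. D_iter S \<gamma>))"
proof -
  have "D_iter S \<beta> = (\<lambda>f \<beta>.
     if ord_zero \<beta> then cl_tr S
     else if ord_succ \<beta> then D_iie (f (ord_pred \<beta>))
     else (\<Inter>\<gamma>\<in>{\<gamma>. \<gamma> < \<beta>}. f \<gamma>)) (cut (D_iter S) {(x, y). x < y} \<beta>) \<beta>"
    unfolding D_iter_def by (rule wfrec[OF wf])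
  then show ?thesis
    by (auto simp: cut_apply ord_pred_less)
qed

lemma D_iter_zero: "ord_zero \<beta> \<Longrightarrow> D_iter S \<beta> = cl_tr S"
  by (subst D_iter_unfold) simp

lemma D_iter_succ: "ord_succ \<beta> \<Longrightarrow> D_iter S \<beta> = D_iie (D_iter S (ord_pred \<beta>))"
  by (subst D_iter_unfold) (simp add: ord_succ_not_zero)

lemma D_iter_limit: "ord_limit \<beta> \<Longrightarrow> D_iter S \<beta> = (\<Inter>\<gamma>\<in>{\<gamma>. \<gamma> < \<beta>}. D_iter S \<gamma>)"
  by (subst D_iter_unfold) (simp add: ord_limit_def)

lemma D_iter_ord_next: "\<gamma> < \<delta> \<Longrightarrow> D_iter S (ord_next \<gamma>) = D_iie (D_iter S \<gamma>)"
  by (simp add: D_iter_succ ord_succ_ord_next ord_pred_ord_next)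

definition graft :: "(nat \<Rightarrow> nat list set) \<Rightarrow> nat list set" where
  "graft T = insert [] (\<Union>n. (\<lambda>t. n # t) ` T n)"

lemma T_tree_unfold:
  assumes "ord_limit \<beta> \<Longrightarrow> \<forall>n. \<pi> \<beta> n < \<beta>"
  shows "T_tree \<pi> \<beta> = (if ord_zero \<beta> then {[]}
     else if ord_succ \<beta> then graft (\<lambda>_. T_tree \<pi> (ord_pred \<beta>))
     else graft (\<lambda>n. T_tree \<pi> (\<pi> \<beta> n)))"
proof -
  have "T_tree \<pi> \<beta> = (\<lambda>f \<beta>.
     if ord_zero \<beta> then {[]}
     else if ord_succ \<beta> then insert [] (\<Union>n. (\<lambda>t. n # t) ` f (ord_pred \<beta>))
     else insert [] (\<Union>n. (\<lambda>t. n # t) ` f (\<pi> \<beta> n))) (cut (T_tree \<pi>) {(x, y). x < y} \<beta>) \<beta>"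
    unfolding T_tree_def by (rule wfrec[OF wf])
  then show ?thesis
    using assms by (auto simp: cut_apply ord_pred_less ord_limit_def graft_def)
qed

definition enumerates_limits :: "('o::wellorder \<Rightarrow> nat \<Rightarrow> 'o) \<Rightarrow> 'o \<Rightarrow> bool" where
  "enumerates_limits \<pi> \<beta> \<longleftrightarrow> (\<forall>\<beta>'. \<beta>' \<le> \<beta> \<longrightarrow> ord_limit \<beta>' \<longrightarrow> bij_betw (\<pi> \<beta>') UNIV {\<gamma>. \<gamma> < \<beta>'})"

lemma enumerates_limits_mono: "enumerates_limits \<pi> \<beta> \<Longrightarrow> \<gamma> \<le> \<beta> \<Longrightarrow> enumerates_limits \<pi> \<gamma>"
  unfolding enumerates_limits_def by (meson order_trans)

lemma enumerates_limits_range: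
  "enumerates_limits \<pi> \<beta> \<Longrightarrow> ord_limit \<beta> \<Longrightarrow> range (\<pi> \<beta>) = {\<gamma>. \<gamma> < \<beta>}"
  unfolding enumerates_limits_def bij_betw_def by blast

lemma enumerates_limits_less: "enumerates_limits \<pi> \<beta> \<Longrightarrow> ord_limit \<beta> \<Longrightarrow> \<pi> \<beta> n < \<beta>"
  using enumerates_limits_range by blast

lemma T_tree_zero: "ord_zero \<beta> \<Longrightarrow> T_tree \<pi> \<beta> = {[]}"
  by (subst T_tree_unfold) (auto simp: ord_limit_def)

lemma T_tree_succ: "ord_succ \<beta> \<Longrightarrow> T_tree \<pi> \<beta> = graft (\<lambda>_. T_tree \<pi> (ord_pred \<beta>))"
  by (subst T_tree_unfold) (auto simp: ord_limit_def ord_succ_not_zero)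

lemma T_tree_limit:
  "enumerates_limits \<pi> \<beta> \<Longrightarrow> ord_limit \<beta> \<Longrightarrow> T_tree \<pi> \<beta> = graft (\<lambda>n. T_tree \<pi> (\<pi> \<beta> n))"
  by (subst T_tree_unfold) (auto simp: ord_limit_def enumerates_limits_less)

lemma Nil_in_T_tree: "enumerates_limits \<pi> \<beta> \<Longrightarrow> [] \<in> T_tree \<pi> \<beta>"
  by (cases "ord_zero \<beta>"; cases "ord_succ \<beta>")
    (auto simp: T_tree_zero T_tree_succ T_tree_limit ord_limit_def graft_def)

section \<open>Prefix-closed trees and the derivative \<open>D\<^sub>i\<^sub>i\<^sub>e\<close>\<close>

definition prefix_closed :: "'a list set \<Rightarrow> bool" where
  "prefix_closed S \<longleftrightarrow> (\<forall>t\<in>S. \<forall>s. prefix s t \<longrightarrow> s \<in> S)"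

definition no_infinite_branch :: "'a list set \<Rightarrow> bool" where
  "no_infinite_branch S \<longleftrightarrow> \<not> (\<exists>f. \<forall>n. f n \<in> S \<and> strict_prefix (f n) (f (Suc n)))"

lemma prefix_closedD: "prefix_closed S \<Longrightarrow> t \<in> S \<Longrightarrow> prefix s t \<Longrightarrow> s \<in> S"
  unfolding prefix_closed_def by blast

lemma prefix_closed_Nil: "prefix_closed S \<Longrightarrow> S \<noteq> {} \<longleftrightarrow> [] \<in> S"
  using prefix_closedD[of S _ "[]"] by (metis Nil_prefix empty_iff equals0I)

lemma prefix_closed_cl_tr: "prefix_closed (cl_tr S)"
  unfolding prefix_closed_def cl_tr_def using prefix_order.trans by blast

lemma cl_tr_prefix_closed: "prefix_closed S \<Longrightarrow> cl_tr S = S"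
  unfolding prefix_closed_def cl_tr_def by blast

lemma no_infinite_branch_subset:
  "T \<subseteq> S \<Longrightarrow> no_infinite_branch S \<Longrightarrow> no_infinite_branch T"
  unfolding no_infinite_branch_def by blast

lemma D_iie_subset: "D_iie T \<subseteq> T"
  unfolding D_iie_def by blast

lemma prefix_closed_D_iie:
  assumes "prefix_closed T"
  shows "prefix_closed (D_iie T)"
  unfolding prefix_closed_def
proof (intro ballI allI impI)
  fix t s
  assume "t \<in> D_iie T" and st: "prefix s t"
  then have "s \<in> T"
    using assms prefix_closedD D_iie_subset by blast
  obtain E where "E \<subseteq> T" "infinite E" "\<forall>u\<in>E. prefix t u"
    and "\<forall>u\<in>E. \<forall>v\<in>E. u \<noteq> v \<longrightarrow> \<not> prefix u v \<and> \<not> prefix v u \<and> length u \<noteq> length v"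
    using \<open>t \<in> D_iie T\<close> unfolding D_iie_def by (elim CollectE conjE exE) blast
  with \<open>s \<in> T\<close> show "s \<in> D_iie T"
    unfolding D_iie_def using prefix_order.trans[OF st] by auto
qed

lemma D_iter_prefix_closed_subset: "prefix_closed (D_iter S \<beta>) \<and> D_iter S \<beta> \<subseteq> cl_tr S"
proof (induction \<beta> rule: less_induct)
  case (less \<beta>)
  consider "ord_zero \<beta>" | "ord_succ \<beta>" | "ord_limit \<beta>"
    unfolding ord_limit_def by blast
  then show ?case
  proof cases
    case 1
    then show ?thesis by (simp add: D_iter_zero prefix_closed_cl_tr)
  next
    case 2
    then have "prefix_closed (D_iter S (ord_pred \<beta>)) \<and> D_iter S (ord_pred \<beta>) \<subseteq> cl_tr S"
      using less ord_pred_less by blast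
    then show ?thesis
      using D_iie_subset prefix_closed_D_iie unfolding D_iter_succ[OF 2] by blast
  next
    case 3
    then obtain \<gamma> where "\<gamma> < \<beta>"
      unfolding ord_limit_def ord_zero_def by blast
    then show ?thesis
      using less unfolding D_iter_limit[OF 3] prefix_closed_def by blast
  qed
qed

lemma prefix_closed_D_iter: "prefix_closed (D_iter S \<beta>)"
  using D_iter_prefix_closed_subset by blast

lemma D_iter_subset: "prefix_closed S \<Longrightarrow> D_iter S \<beta> \<subseteq> S"
  using D_iter_prefix_closed_subset cl_tr_prefix_closed by metis

lemma D_iie_extension:
  assumes "prefix_closed T" and "u \<in> D_iie T"
  shows "\<exists>v\<in>T. prefix u v \<and> length v = length u + n"
proof -
  obtain E where E: "E \<subseteq> T" "infinite E" "\<forall>e\<in>E. prefix u e"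
    and distinct: "\<forall>x\<in>E. \<forall>y\<in>E. x \<noteq> y \<longrightarrow> \<not> prefix x y \<and> \<not> prefix y x \<and> length x \<noteq> length y"
    using assms(2) unfolding D_iie_def by (elim CollectE conjE exE) blast
  have "inj_on length E"
    using distinct by (meson inj_onI)
  then have "infinite (length ` E)"
    using E(2) finite_imageD by blast
  then obtain e where e: "e \<in> E" "length u + n \<le> length e"
    unfolding infinite_nat_iff_unbounded_le by auto
  then obtain z where z: "e = u @ z"
    using E(3) prefixE by metis
  have "take (length u + n) e \<in> T"
    using E(1) e(1) prefix_closedD[OF assms(1) _ take_is_prefix] by blast
  then show ?thesis
    using e(2) unfolding z by (intro bexI[of _ "u @ take n z"]) auto
qed

lemma parallel_snoc_extensions:
  assumes "prefix (w @ [a]) x" and "prefix (w @ [b]) y" and "a \<noteq> b"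
  shows "x \<parallel> y"
proof -
  have "w @ [a] \<parallel> w @ [b]"
    using assms(3) by (intro not_equal_is_parallel) auto
  moreover obtain z z' where "x = (w @ [a]) @ z" and "y = (w @ [b]) @ z'"
    using assms(1,2) prefixE by metis
  ultimately show ?thesis
    by (rule parallel_appendI)
qed

lemma mem_D_iieI:
  assumes "w \<in> D" and "infinite Hs"
    and "\<And>h. h \<in> Hs \<Longrightarrow> \<exists>a. \<exists>v\<in>D. prefix (w @ [a]) v \<and> length v = h \<and>
           (\<forall>v'\<in>D. prefix (w @ [a]) v' \<longrightarrow> length v' \<le> h)"
  shows "w \<in> D_iie D"
proof -
  obtain a V where V: "\<And>h. h \<in> Hs \<Longrightarrow> V h \<in> D \<and> prefix (w @ [a h]) (V h) \<and> length (V h) = h \<and>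
      (\<forall>v'\<in>D. prefix (w @ [a h]) v' \<longrightarrow> length v' \<le> h)"
    using assms(3) by metis
  have a_inj: "h = h'" if "h \<in> Hs" "h' \<in> Hs" "a h = a h'" for h h'
    using V[OF that(1)] V[OF that(2)] that(3) by (metis le_antisym)
  have "inj_on V Hs"
    using V by (metis inj_onI)
  then have "infinite (V ` Hs)"
    using assms(2) finite_imageD by blast
  moreover have "V ` Hs \<subseteq> D" and "\<forall>v\<in>V ` Hs. prefix w v"
    using V by (auto intro: prefix_order.trans[OF prefixI])
  moreover have "\<not> prefix x y \<and> \<not> prefix y x \<and> length x \<noteq> length y"
    if xy: "x \<in> V ` Hs" "y \<in> V ` Hs" "x \<noteq> y" for x y
  proof -
    obtain h h' where hh: "h \<in> Hs" "h' \<in> Hs" "x = V h" "y = V h'" "h \<noteq> h'"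
      using xy by blast
    then have "x \<parallel> y"
      using V a_inj by (metis parallel_snoc_extensions)
    then show ?thesis
      using V hh by auto
  qed
  ultimately show ?thesis
    unfolding D_iie_def using assms(1) by blast
qed

definition unbounded_at :: "'a list set \<Rightarrow> 'a list \<Rightarrow> bool" where
  "unbounded_at D w \<longleftrightarrow> (\<forall>n. \<exists>v\<in>D. prefix w v \<and> n \<le> length v)"

lemma unbounded_at_mem: "prefix_closed D \<Longrightarrow> unbounded_at D w \<Longrightarrow> w \<in> D"
  unfolding unbounded_at_def using prefix_closedD by blast

lemma unbounded_at_bounded_children:
  assumes "prefix_closed D" and "no_infinite_branch D" and "unbounded_at D u"
  shows "\<exists>w. prefix u w \<and> unbounded_at D w \<and> (\<forall>a. \<not> unbounded_at D (w @ [a]))"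
proof (rule ccontr)
  assume no_w: "\<not> ?thesis"
  have "\<exists>w'. (prefix u w' \<and> unbounded_at D w') \<and> strict_prefix w w'"
    if w: "prefix u w \<and> unbounded_at D w" for w
  proof -
    obtain a where "unbounded_at D (w @ [a])"
      using no_w w by blast
    moreover have "prefix u (w @ [a])" and "strict_prefix w (w @ [a])"
      using w by (auto intro: strict_prefixI')
    ultimately show ?thesis by blast
  qed
  then obtain f where "\<forall>n. (prefix u (f n) \<and> unbounded_at D (f n)) \<and> strict_prefix (f n) (f (Suc n))"
    using dependent_nat_choice[of "\<lambda>_ w. prefix u w \<and> unbounded_at D w" "\<lambda>_. strict_prefix"] assms(3)
    by blast
  then show False
    using assms(2) unbounded_at_mem[OF assms(1)] unfolding no_infinite_branch_def by blast
qed

lemma infinite_child_heights: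
  assumes "prefix_closed D" and "unbounded_at D w"
    and H: "\<And>a v. v \<in> D \<Longrightarrow> prefix (w @ [a]) v \<Longrightarrow> length v \<le> H a"
  shows "infinite (H ` {a. w @ [a] \<in> D})"
proof
  assume "finite (H ` {a. w @ [a] \<in> D})"
  then obtain M where M: "\<And>a. w @ [a] \<in> D \<Longrightarrow> H a \<le> M"
    unfolding finite_nat_set_iff_bounded_le by blast
  have "length v \<le> M + length w" if v: "v \<in> D" "prefix w v" for v
  proof (cases "v = w")
    case False
    then obtain a z where vz: "v = w @ a # z"
      using v(2) by (metis prefixE append_Nil2 neq_Nil_conv)
    then have "w @ [a] \<in> D"
      using prefix_closedD[OF assms(1) v(1)] by simp
    then show ?thesis
      using M H[OF v(1)] vz by fastforce
  qed simp
  then show False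
    using assms(2) unfolding unbounded_at_def by (meson not_less_eq_eq)
qed

text \<open>Below each child of \<open>w\<close> take an extension of maximal length: as the heights of the
  children are unbounded, infinitely many distinct heights occur, and extensions below distinct
  children are incomparable.\<close>

lemma bounded_children_mem_D_iie:
  assumes "prefix_closed D" and "unbounded_at D w" and "\<And>a. \<not> unbounded_at D (w @ [a])"
  shows "w \<in> D_iie D"
proof -
  define Ext where "Ext a = {v \<in> D. prefix (w @ [a]) v}" for a
  define H where "H a = Max (length ` Ext a)" for a
  have fin: "finite (length ` Ext a)" for a
  proof -
    obtain n where "\<forall>v\<in>Ext a. length v < n"
      using assms(3)[of a] unfolding unbounded_at_def Ext_def by (auto simp: not_le)
    then show ?thesis
      unfolding finite_nat_set_iff_bounded by blast
  qed
  have H_ge: "length v \<le> H a" if "v \<in> D" "prefix (w @ [a]) v" for v a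
    unfolding H_def using fin that by (simp add: Ext_def)
  have H_in: "\<exists>v\<in>Ext a. length v = H a" if "w @ [a] \<in> D" for a
  proof -
    have "w @ [a] \<in> Ext a"
      using that unfolding Ext_def by simp
    then have "H a \<in> length ` Ext a"
      unfolding H_def using fin by (intro Max_in) auto
    then show ?thesis by auto
  qed
  show ?thesis
  proof (rule mem_D_iieI[OF unbounded_at_mem[OF assms(1,2)] infinite_child_heights[OF assms(1,2) H_ge]])
    fix h assume "h \<in> H ` {a. w @ [a] \<in> D}"
    then obtain a where "w @ [a] \<in> D" "h = H a" by blast
    then show "\<exists>a. \<exists>v\<in>D. prefix (w @ [a]) v \<and> length v = h \<and> (\<forall>v'\<in>D. prefix (w @ [a]) v' \<longrightarrow> length v' \<le> h)"
      using H_in H_ge unfolding Ext_def by blast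
  qed
qed

lemma mem_D_iie_iff_extensions:
  assumes "prefix_closed D" and "no_infinite_branch D"
  shows "u \<in> D_iie D \<longleftrightarrow> (\<forall>n. \<exists>v\<in>D. prefix u v \<and> length v = length u + n)"
proof
  assume "u \<in> D_iie D"
  then show "\<forall>n. \<exists>v\<in>D. prefix u v \<and> length v = length u + n"
    using D_iie_extension[OF assms(1)] by blast
next
  assume "\<forall>n. \<exists>v\<in>D. prefix u v \<and> length v = length u + n"
  then have "unbounded_at D u"
    unfolding unbounded_at_def by (metis le_add2)
  then obtain w where "prefix u w" "unbounded_at D w" "\<forall>a. \<not> unbounded_at D (w @ [a])"
    using unbounded_at_bounded_children[OF assms] by blast
  then show "u \<in> D_iie D"
    using bounded_children_mem_D_iie[OF assms(1)] prefix_closed_D_iie[OF assms(1)] prefix_closedD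
    by blast
qed

section \<open>Admissible embeddings of the trees \<open>T\<^sub>\<beta>\<close>\<close>

text \<open>An admissible map of \<open>T\<close> into \<open>S\<close>, shifted to start at \<open>u\<close>; for \<open>u = []\<close> and
  \<open>S = S_C C y\<close> its existence means \<open>y \<in> R_tree_sp T C\<close>.\<close>

definition embedding_above ::
    "nat list set \<Rightarrow> 'a list \<Rightarrow> (nat list \<Rightarrow> 'a list) \<Rightarrow> 'a list set \<Rightarrow> bool" where
  "embedding_above T u \<phi> S \<longleftrightarrow>
     (\<forall>s\<in>T. \<forall>t\<in>T. prefix s t \<longrightarrow> prefix (\<phi> s) (\<phi> t)) \<and>
     (\<forall>t\<in>T. prefix u (\<phi> t) \<and> length (\<phi> t) = length u + sum_list t \<and> \<phi> t \<in> S)"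

lemma embedding_above_root:
  assumes "embedding_above T u \<phi> S" and "[] \<in> T"
  shows "\<phi> [] = u" and "u \<in> S"
proof -
  have "prefix u (\<phi> [])" "length (\<phi> []) = length u" "\<phi> [] \<in> S"
    using assms unfolding embedding_above_def by auto
  then show "\<phi> [] = u"
    by (auto simp: prefix_def)
  with \<open>\<phi> [] \<in> S\<close> show "u \<in> S" by simp
qed

lemma embeddable_singleton_iff: "(\<exists>\<phi>. embedding_above {[]} u \<phi> S) \<longleftrightarrow> u \<in> S"
proof
  assume "u \<in> S"
  then have "embedding_above {[]} u (\<lambda>_. u) S"
    unfolding embedding_above_def by simp
  then show "\<exists>\<phi>. embedding_above {[]} u \<phi> S" by blast
qed (auto dest: embedding_above_root(2))

lemma embedding_above_graftI:
  assumes emb: "\<And>n. embedding_above (T n) (V n) (\<Psi> n) S"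
    and V: "\<And>n. prefix u (V n)" "\<And>n. length (V n) = length u + n" and "u \<in> S"
  shows "embedding_above (graft T) u (\<lambda>t. case t of [] \<Rightarrow> u | n # t' \<Rightarrow> \<Psi> n t') S"
proof -
  let ?\<phi> = "\<lambda>t. case t of [] \<Rightarrow> u | n # t' \<Rightarrow> \<Psi> n t'"
  have branch: "prefix (V n) (\<Psi> n t) \<and> length (\<Psi> n t) = length (V n) + sum_list t \<and> \<Psi> n t \<in> S"
    if "t \<in> T n" for n t
    using emb[of n] that unfolding embedding_above_def by blast
  have above: "prefix u (?\<phi> t) \<and> length (?\<phi> t) = length u + sum_list t \<and> ?\<phi> t \<in> S"
    if "t \<in> graft T" for t
  proof -
    from that consider "t = []" | n t' where "t = n # t'" "t' \<in> T n"
      unfolding graft_def by blast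
    then show ?thesis
      by cases (use \<open>u \<in> S\<close> branch V in \<open>auto intro: prefix_order.trans\<close>)
  qed
  have "prefix (?\<phi> s) (?\<phi> t)" if s: "s \<in> graft T" and t: "t \<in> graft T" and st: "prefix s t" for s t
  proof (cases s)
    case Nil
    then show ?thesis
      using above[OF t] by simp
  next
    case (Cons n s')
    then obtain t' where "t = n # t'" "prefix s' t'"
      using st by (auto simp: prefix_def)
    then show ?thesis
      using s t Cons emb[of n] unfolding graft_def embedding_above_def by auto
  qed
  then show ?thesis
    unfolding embedding_above_def using above by blast
qed

lemma embedding_above_graftD:
  assumes emb: "embedding_above (graft T) u \<phi> S" and "[] \<in> T n"
  shows "embedding_above (T n) (\<phi> [n]) (\<lambda>t. \<phi> (n # t)) S"
    and "prefix u (\<phi> [n])" and "length (\<phi> [n]) = length u + n"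
proof -
  have branch: "n # t \<in> graft T" if "t \<in> T n" for t
    using that unfolding graft_def by blast
  have mono: "prefix (\<phi> s) (\<phi> t)" if "s \<in> graft T" "t \<in> graft T" "prefix s t" for s t
    using emb that unfolding embedding_above_def by blast
  have above: "prefix u (\<phi> t) \<and> length (\<phi> t) = length u + sum_list t \<and> \<phi> t \<in> S"
    if "t \<in> graft T" for t
    using emb that unfolding embedding_above_def by blast
  show "prefix u (\<phi> [n])" "length (\<phi> [n]) = length u + n"
    using above[OF branch[OF assms(2)]] by simp_all
  show "embedding_above (T n) (\<phi> [n]) (\<lambda>t. \<phi> (n # t)) S"
    unfolding embedding_above_def
    using mono[OF branch[OF assms(2)] branch] mono[OF branch branch] above[OF branch]
      above[OF branch[OF assms(2)]]
    by auto
qed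

lemma embeddable_graft_iff:
  assumes "\<And>n. [] \<in> T n" and "\<And>n v. (\<exists>\<phi>. embedding_above (T n) v \<phi> S) \<longleftrightarrow> v \<in> D n"
  shows "(\<exists>\<phi>. embedding_above (graft T) u \<phi> S) \<longleftrightarrow>
         u \<in> S \<and> (\<forall>n. \<exists>v\<in>D n. prefix u v \<and> length v = length u + n)"
proof
  assume "\<exists>\<phi>. embedding_above (graft T) u \<phi> S"
  then obtain \<phi> where \<phi>: "embedding_above (graft T) u \<phi> S" ..
  have "u \<in> S"
    using embedding_above_root(2)[OF \<phi>] unfolding graft_def by blast
  moreover have "\<phi> [n] \<in> D n" for n
    using embedding_above_graftD(1)[OF \<phi> assms(1)] assms(2) by blast
  ultimately show "u \<in> S \<and> (\<forall>n. \<exists>v\<in>D n. prefix u v \<and> length v = length u + n)"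
    using embedding_above_graftD(2,3)[OF \<phi> assms(1)] by blast
next
  assume u: "u \<in> S \<and> (\<forall>n. \<exists>v\<in>D n. prefix u v \<and> length v = length u + n)"
  then obtain V where V: "\<And>n. V n \<in> D n \<and> prefix u (V n) \<and> length (V n) = length u + n"
    by metis
  then have "\<forall>n. \<exists>\<psi>. embedding_above (T n) (V n) \<psi> S"
    using assms(2) by blast
  then obtain \<Psi> where "\<And>n. embedding_above (T n) (V n) (\<Psi> n) S"
    by metis
  then show "\<exists>\<phi>. embedding_above (graft T) u \<phi> S"
    using embedding_above_graftI V u by blast
qed

lemma mem_D_iter_limit_iff:
  assumes "prefix_closed S" and "ord_limit \<beta>" and f: "range f = {\<gamma>. \<gamma> < \<beta>}"
  shows "u \<in> D_iter S \<beta> \<longleftrightarrow>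
         u \<in> S \<and> (\<forall>n. \<exists>v\<in>D_iter S (f n). prefix u v \<and> length v = length u + n)"
proof
  assume u: "u \<in> D_iter S \<beta>"
  have "\<exists>v\<in>D_iter S (f n). prefix u v \<and> length v = length u + n" for n
  proof -
    have "f n < \<beta>" using f by blast
    then obtain \<delta> where "f n < \<delta>" "\<delta> < \<beta>"
      using assms(2) unfolding ord_limit_def ord_succ_def by (meson not_le)
    then have "ord_next (f n) < \<beta>"
      using ord_next_le by (meson order_le_less_trans)
    then have "u \<in> D_iie (D_iter S (f n))"
      using u D_iter_ord_next[OF \<open>f n < \<delta>\<close>] unfolding D_iter_limit[OF assms(2)] by blast
    then show ?thesis
      using D_iie_extension prefix_closed_D_iter by blast
  qed
  then show "u \<in> S \<and> (\<forall>n. \<exists>v\<in>D_iter S (f n). prefix u v \<and> length v = length u + n)"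
    using u D_iter_subset[OF assms(1)] by blast
next
  assume "u \<in> S \<and> (\<forall>n. \<exists>v\<in>D_iter S (f n). prefix u v \<and> length v = length u + n)"
  then have "u \<in> D_iter S (f n)" for n
    using prefix_closed_D_iter prefix_closedD by blast
  moreover have "\<gamma> \<in> range f" if "\<gamma> < \<beta>" for \<gamma>
    using f that by simp
  ultimately show "u \<in> D_iter S \<beta>"
    unfolding D_iter_limit[OF assms(2)] by blast
qed

lemma embeddable_T_tree_iff:
  fixes \<pi> :: "'o::wellorder \<Rightarrow> nat \<Rightarrow> 'o"
  assumes S: "prefix_closed S" "no_infinite_branch S" and "enumerates_limits \<pi> \<beta>"
  shows "(\<exists>\<phi>. embedding_above (T_tree \<pi> \<beta>) u \<phi> S) \<longleftrightarrow> u \<in> D_iter S \<beta>"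
  using assms(3)
proof (induction \<beta> arbitrary: u rule: less_induct)
  case (less \<beta>)
  consider "ord_zero \<beta>" | "ord_succ \<beta>" | "ord_limit \<beta>"
    unfolding ord_limit_def by blast
  then show ?case
  proof cases
    case 1
    then show ?thesis
      by (simp add: T_tree_zero D_iter_zero cl_tr_prefix_closed[OF S(1)] embeddable_singleton_iff)
  next
    case 2
    let ?\<gamma> = "ord_pred \<beta>"
    have "enumerates_limits \<pi> ?\<gamma>"
      using enumerates_limits_mono[OF less.prems less_imp_le[OF ord_pred_less[OF 2]]] .
    with less.IH[OF ord_pred_less[OF 2]]
    have IH: "(\<exists>\<phi>. embedding_above (T_tree \<pi> ?\<gamma>) v \<phi> S) \<longleftrightarrow> v \<in> D_iter S ?\<gamma>" for v
      by blast
    have D: "prefix_closed (D_iter S ?\<gamma>)" "no_infinite_branch (D_iter S ?\<gamma>)"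
      using prefix_closed_D_iter no_infinite_branch_subset[OF D_iter_subset[OF S(1)] S(2)] by blast+
    have "(\<exists>\<phi>. embedding_above (T_tree \<pi> \<beta>) u \<phi> S) \<longleftrightarrow>
        u \<in> S \<and> (\<forall>n. \<exists>v\<in>D_iter S ?\<gamma>. prefix u v \<and> length v = length u + n)"
      unfolding T_tree_succ[OF 2]
      by (rule embeddable_graft_iff[OF Nil_in_T_tree[OF \<open>enumerates_limits \<pi> ?\<gamma>\<close>] IH])
    also have "\<dots> \<longleftrightarrow> u \<in> D_iter S \<beta>"
      unfolding D_iter_succ[OF 2] mem_D_iie_iff_extensions[OF D, symmetric]
      using D_iie_subset D_iter_subset[OF S(1)] by blast
    finally show ?thesis .
  next
    case 3
    have lt: "\<pi> \<beta> n < \<beta>" for n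
      using enumerates_limits_less[OF less.prems 3] .
    have enums: "enumerates_limits \<pi> (\<pi> \<beta> n)" for n
      using enumerates_limits_mono[OF less.prems less_imp_le[OF lt]] .
    have IH: "(\<exists>\<phi>. embedding_above (T_tree \<pi> (\<pi> \<beta> n)) v \<phi> S) \<longleftrightarrow> v \<in> D_iter S (\<pi> \<beta> n)"
      for n v
      using less.IH[OF lt enums] .
    show ?thesis
      unfolding T_tree_limit[OF less.prems 3]
        mem_D_iter_limit_iff[OF S(1) 3 enumerates_limits_range[OF less.prems 3]]
      by (rule embeddable_graft_iff[OF Nil_in_T_tree[OF enums] IH])
  qed
qed

lemma embeddable_branch_iff:
  assumes "prefix_closed S" and "[] \<in> T"
    and IH: "\<And>v. (\<exists>\<phi>. embedding_above T v \<phi> S) \<longleftrightarrow> v \<in> D"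
  shows "(\<exists>\<phi>. embedding_above (insert [] ((\<lambda>t. i # t) ` T)) [] \<phi> S) \<longleftrightarrow> (\<exists>v\<in>D. length v = i)"
proof -
  define T' where "T' n = (if n = i then T else {})" for n
  have "(\<Union>n. (\<lambda>t. n # t) ` T' n) = (\<lambda>t. i # t) ` T"
    unfolding T'_def by (intro equalityI subsetI) (auto split: if_splits)
  then have "insert [] ((\<lambda>t. i # t) ` T) = graft T'"
    unfolding graft_def by simp
  moreover have "[] \<in> T' i"
    unfolding T'_def using assms(2) by simp
  moreover have "(\<exists>\<phi>. embedding_above (graft T') [] \<phi> S)" if v: "v \<in> D" "length v = i" for v
  proof -
    obtain \<psi> where \<psi>: "embedding_above T v \<psi> S"
      using IH v(1) by blast
    \<comment> \<open>the subtrees \<open>T' n\<close> with \<open>n \<noteq> i\<close> are empty, so their roots \<open>V n\<close> are irrelevant\<close>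
    define V where "V n = (if n = i then v else replicate n undefined)" for n
    have "embedding_above (T' n) (V n) \<psi> S" for n
      using \<psi> unfolding T'_def V_def by (cases "n = i") (simp_all add: embedding_above_def)
    moreover have "[] \<in> S"
      using prefix_closedD[OF assms(1) embedding_above_root(2)[OF \<psi> assms(2)] Nil_prefix] .
    moreover have "length (V n) = n" for n
      unfolding V_def using v(2) by simp
    ultimately show ?thesis
      using embedding_above_graftI[of T' V "\<lambda>_. \<psi>" S "[]"] by auto
  qed
  moreover have "\<exists>v\<in>D. length v = i" if "embedding_above (graft T') [] \<phi> S" for \<phi>
  proof -
    have "\<phi> [i] \<in> D"
      using embedding_above_graftD(1)[OF that \<open>[] \<in> T' i\<close>] IH unfolding T'_def by auto
    then show ?thesis
      using embedding_above_graftD(3)[OF that \<open>[] \<in> T' i\<close>] by auto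
  qed
  ultimately show ?thesis
    by metis
qed

section \<open>The trees \<open>S\<^sub>C(y)\<close>\<close>

lemma prefix_closed_S_C: "suslin_scheme C \<Longrightarrow> prefix_closed (S_C C y)"
  unfolding prefix_closed_def S_C_def suslin_scheme_def using closure_mono by blast

lemma infinite_branch_enumeration:
  assumes "prefix_closed S" and "\<not> no_infinite_branch S"
  shows "\<exists>\<sigma>. \<forall>n. map \<sigma> [0..<n] \<in> S"
proof -
  obtain f where f: "\<And>n. f n \<in> S" "\<And>n. strict_prefix (f n) (f (Suc n))"
    using assms(2) unfolding no_infinite_branch_def by blast
  have len: "n \<le> length (f n)" for n
  proof (induction n)
    case (Suc n)
    then show ?case
      using prefix_length_less[OF f(2)[of n]] by simp
  qed simp
  have chain: "prefix (f m) (f n)" if "m \<le> n" for m n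
    using prefix_order.lift_Suc_mono_le[of f, OF _ that] f(2) prefix_order.less_imp_le by blast
  define \<sigma> where "\<sigma> k = f (Suc k) ! k" for k
  have "map \<sigma> [0..<n] = take n (f n)" for n
  proof (rule nth_equalityI)
    show "length (map \<sigma> [0..<n]) = length (take n (f n))"
      using len[of n] by simp
    fix k assume "k < length (map \<sigma> [0..<n])"
    then have k: "k < n" by simp
    have "f (Suc k) ! k = f n ! k"
      using chain[of "Suc k" n] k len[of "Suc k"] by (metis Suc_leI Suc_le_lessD nth_append prefix_def)
    then show "map \<sigma> [0..<n] ! k = take n (f n) ! k"
      using k unfolding \<sigma>_def by simp
  qed
  then show ?thesis
    using prefix_closedD[OF assms(1) f(1) take_is_prefix] by metis
qed

lemma no_infinite_branch_S_C:
  assumes "suslin_scheme C" and "y \<notin> suslin_op (closure_scheme C)"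
  shows "no_infinite_branch (S_C C y)"
proof (rule ccontr)
  assume "\<not> no_infinite_branch (S_C C y)"
  then obtain \<sigma> where "\<forall>n. map \<sigma> [0..<n] \<in> S_C C y"
    using infinite_branch_enumeration prefix_closed_S_C[OF assms(1)] by blast
  then have "y \<in> suslin_op (closure_scheme C)"
    unfolding suslin_op_def closure_scheme_def S_C_def by blast
  with assms(2) show False ..
qed

lemma R_tree_sp_iff_embeddable:
  assumes "[] \<in> T"
  shows "y \<in> R_tree_sp T C \<longleftrightarrow> (\<exists>\<phi>. embedding_above T [] \<phi> (S_C C y))"
proof
  assume "y \<in> R_tree_sp T C"
  then obtain \<phi> where "admissible T \<phi>" "\<forall>t\<in>T. y \<in> closure (C (\<phi> t))"
    unfolding R_tree_sp_def R_tree_def closure_scheme_def by blast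
  then have "embedding_above T [] \<phi> (S_C C y)"
    unfolding embedding_above_def admissible_def S_C_def by auto
  then show "\<exists>\<phi>. embedding_above T [] \<phi> (S_C C y)" by blast
next
  assume "\<exists>\<phi>. embedding_above T [] \<phi> (S_C C y)"
  then obtain \<phi> where \<phi>: "embedding_above T [] \<phi> (S_C C y)" ..
  then have "admissible T \<phi>" "\<forall>t\<in>T. y \<in> closure (C (\<phi> t))"
    unfolding embedding_above_def admissible_def S_C_def by auto
  moreover have "\<phi> [] = []"
    using embedding_above_root(1)[OF \<phi> assms] .
  ultimately show "y \<in> R_tree_sp T C"
    using assms unfolding R_tree_sp_def R_tree_def closure_scheme_def by force
qed

lemma R_tree_sp_T_tree_iff:
  assumes "suslin_scheme C" and "y \<notin> suslin_op (closure_scheme C)" and "enumerates_limits \<pi> \<beta>"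
  shows "y \<in> R_tree_sp (T_tree \<pi> \<beta>) C \<longleftrightarrow> D_iter (S_C C y) \<beta> \<noteq> {}"
  unfolding R_tree_sp_iff_embeddable[OF Nil_in_T_tree[OF assms(3)]]
    embeddable_T_tree_iff[OF prefix_closed_S_C[OF assms(1)] no_infinite_branch_S_C[OF assms(1,2)] assms(3)]
  using prefix_closed_Nil prefix_closed_D_iter by blast

lemma R_tree_sp_Tc_odd_iff:
  assumes "suslin_scheme C" and "y \<notin> suslin_op (closure_scheme C)" and "enumerates_limits \<pi> (ord_prime \<alpha>)"
  shows "y \<in> R_tree_sp (Tc_odd \<pi> \<alpha> i) C \<longleftrightarrow> D_iter (S_C C y) (ord_prime \<alpha>) \<inter> {s. length s = i} \<noteq> {}"
proof -
  note S = prefix_closed_S_C[OF assms(1)] no_infinite_branch_S_C[OF assms(1,2)]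
  have "y \<in> R_tree_sp (Tc_odd \<pi> \<alpha> i) C \<longleftrightarrow> (\<exists>v\<in>D_iter (S_C C y) (ord_prime \<alpha>). length v = i)"
    unfolding R_tree_sp_iff_embeddable[OF insertI1[of "[]", folded Tc_odd_def]] Tc_odd_def
    by (rule embeddable_branch_iff[OF S(1) Nil_in_T_tree[OF assms(3)] embeddable_T_tree_iff[OF S assms(3)]])
  then show ?thesis by blast
qed

lemma prefix_closed_psubset_Nil:
  assumes "prefix_closed D"
  shows "{[]} \<subset> D \<longleftrightarrow> D \<inter> {s. length s = 1} \<noteq> {}"
proof
  assume "{[]} \<subset> D"
  then obtain w where w: "w \<in> D" "w \<noteq> []" by blast
  then have "take 1 w \<in> D \<inter> {s. length s = 1}"
    using prefix_closedD[OF assms w(1) take_is_prefix[of 1]] by (cases w) auto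
  then show "D \<inter> {s. length s = 1} \<noteq> {}" by blast
next
  assume "D \<inter> {s. length s = 1} \<noteq> {}"
  then obtain w where "w \<in> D" "length w = 1" by blast
  then show "{[]} \<subset> D"
    using prefix_closedD[OF assms _ Nil_prefix] by fastforce
qed

theorem proposition6p9:
  fixes X :: "'a::topological_space set" and C :: "nat list \<Rightarrow> 'a set"
    and \<pi> :: "'o::wellorder \<Rightarrow> nat \<Rightarrow> 'o" and \<alpha> :: 'o
  assumes "countable {\<gamma>. \<gamma> < \<alpha>}"
    and "\<forall>\<beta>. \<beta> \<le> \<alpha> \<longrightarrow> ord_limit \<beta> \<longrightarrow> bij_betw (\<pi> \<beta>) UNIV {\<gamma>. \<gamma> < \<beta>}"
    and "suslin_scheme C" and "X \<subseteq> suslin_op C"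
    and "suslin_op (closure_scheme C) = X"
  shows "(ord_even \<alpha> \<longrightarrow>
            R_alpha \<pi> \<alpha> C - X = {y. y \<notin> X \<and> D_iter (S_C C y) (ord_prime \<alpha>) \<noteq> {}})
       \<and> (\<not> ord_even \<alpha> \<longrightarrow>
            R_alpha \<pi> \<alpha> C - X = {y. y \<notin> X \<and> {[]} \<subset> D_iter (S_C C y) (ord_prime \<alpha>)})
       \<and> (\<not> ord_even \<alpha> \<longrightarrow> (\<forall>i. R_tree_sp (Tc_odd \<pi> \<alpha> i) C - X =
            {y. y \<notin> X \<and> D_iter (S_C C y) (ord_prime \<alpha>) \<inter> {s. length s = i} \<noteq> {}}))"
proof -
  have "enumerates_limits \<pi> \<alpha>"
    unfolding enumerates_limits_def using assms(2) .
  then have enums: "enumerates_limits \<pi> (ord_prime \<alpha>)"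
    using enumerates_limits_mono ord_prime_le by blast
  have outside: "y \<notin> suslin_op (closure_scheme C)" if "y \<notin> X" for y
    using that assms(5) by simp
  have even: "R_tree_sp (T_tree \<pi> (ord_prime \<alpha>)) C - X =
      {y. y \<notin> X \<and> D_iter (S_C C y) (ord_prime \<alpha>) \<noteq> {}}"
    using R_tree_sp_T_tree_iff[OF assms(3) outside enums] by auto
  have odd: "R_tree_sp (Tc_odd \<pi> \<alpha> i) C - X =
      {y. y \<notin> X \<and> D_iter (S_C C y) (ord_prime \<alpha>) \<inter> {s. length s = i} \<noteq> {}}" for i
    using R_tree_sp_Tc_odd_iff[OF assms(3) outside enums] by auto
  have "{[]} \<subset> D_iter (S_C C y) (ord_prime \<alpha>) \<longleftrightarrow>
      D_iter (S_C C y) (ord_prime \<alpha>) \<inter> {s. length s = 1} \<noteq> {}" for y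
    using prefix_closed_psubset_Nil[OF prefix_closed_D_iter] .
  then show ?thesis
    unfolding R_alpha_def Tc_def using even odd by simp
qed

end
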